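(* For any natural number $n\ge1$ and variables $x,y$, \[ \Psi(xy,\,-x^2-y^2,\,n)=\frac{x^n+y^n}{(x+y)^{\delta(n)}},\qquad \Phi(xy,\,-x^2-y^2,\,n)=\frac{x^n-y^n}{(x-y)(x+y)^{\delta(n-1)}}. \]
   Context: $\delta(m)=1$ for $m$ odd, $0$ for $m$ even. $\Psi(a,b,n)$, $\Phi(a,b,n)$ are defined by $\Psi(a,b,0)=2$, $\Psi(a,b,1)=1$, $\Psi(a,b,n+1)=(2a-b)^{\delta(n)}\Psi(a,b,n)-a\Psi(a,b,n-1)$ and $\Phi(a,b,0)=0$, $\Phi(a,b,1)=1$, $\Phi(a,b,n+1)=(2a-b)^{\delta(n+1)}\Phi(a,b,n)-a\Phi(a,b,n-1)$ for $n\ge1$. *)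

theory Defs
  imports Main
begin

definition delta :: "nat \<Rightarrow> nat" where
  "delta m = (if odd m then 1 else 0)"

fun Psi :: "'a::comm_ring_1 \<Rightarrow> 'a \<Rightarrow> nat \<Rightarrow> 'a" where
  "Psi a b 0 = 2"
| "Psi a b (Suc 0) = 1"
| "Psi a b (Suc (Suc n)) =
     (2*a - b) ^ delta (Suc n) * Psi a b (Suc n) - a * Psi a b n"

fun Phi :: "'a::comm_ring_1 \<Rightarrow> 'a \<Rightarrow> nat \<Rightarrow> 'a" where
  "Phi a b 0 = 0"
| "Phi a b (Suc 0) = 1"
| "Phi a b (Suc (Suc n)) =
     (2*a - b) ^ delta (Suc (Suc n)) * Phi a b (Suc n) - a * Phi a b n"

end

theory Submission
  imports Defs
begin

(* With a = x y and b = - x^2 - y^2 we have 2 a - b = (x + y)^2, so both Psi and Phi obey the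
   Lucas recurrence u (n+2) = (x + y) u (n+1) - x y u n, except that the factor x + y is squared
   at every other step and missing at the others. Multiplying the n-th term by (x + y)^delta n
   (resp. by (x + y)^delta (n+1)) redistributes these factors and turns either recurrence into the
   plain Lucas recurrence, which x^n + y^n and x^n - y^n satisfy. *)

lemma delta_Suc_Suc: "delta (Suc (Suc m)) = delta m"
  by (simp add: delta_def)

lemma power_delta_square_shift:
  fixes w :: "'a::comm_ring_1"
  shows "(w^2) ^ delta (Suc m) * w ^ delta (Suc (Suc m)) = w * w ^ delta (Suc m)"
  by (simp add: delta_def power2_eq_square)

lemma power_sum_Lucas_recurrence:
  fixes x y :: "'a::comm_ring_1"
  shows "x ^ Suc (Suc n) + y ^ Suc (Suc n) = (x + y) * (x ^ Suc n + y ^ Suc n) - x * y * (x^n + y^n)"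
  by (simp add: algebra_simps)

lemma power_diff_Lucas_recurrence:
  fixes x y :: "'a::comm_ring_1"
  shows "x ^ Suc (Suc n) - y ^ Suc (Suc n) = (x + y) * (x ^ Suc n - y ^ Suc n) - x * y * (x^n - y^n)"
  by (simp add: algebra_simps)

lemma two_mult_minus_sum_squares:
  fixes x y :: "'a::comm_ring_1"
  shows "2 * (x*y) - (- (x^2) - y^2) = (x + y)^2"
  by (simp add: power2_eq_square algebra_simps)

lemma parity_twisted_recurrence_solution:
  fixes Q u :: "nat \<Rightarrow> 'a::comm_ring_1"
  assumes Q_rec: "\<And>n. Q (Suc (Suc n)) = (w^2) ^ delta (Suc n + k) * Q (Suc n) - p * Q n"
    and u_rec: "\<And>n. u (Suc (Suc n)) = w * u (Suc n) - p * u n"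
    and Q_0: "c * Q 0 * w ^ delta k = u 0"
    and Q_1: "c * Q 1 * w ^ delta (Suc k) = u 1"
  shows "c * Q n * w ^ delta (n + k) = u n"
proof (induction n rule: less_induct)
  case (less n)
  consider "n = 0" | "n = 1" | m where "n = Suc (Suc m)"
    by (metis One_nat_def not0_implies_Suc)
  then show ?case
  proof cases
    case 3
    define j where "j = m + k"
    have IH: "c * Q m * w ^ delta j = u m" "c * Q (Suc m) * w ^ delta (Suc j) = u (Suc m)"
      using less[of m] less[of "Suc m"] 3 by (simp_all add: j_def)
    have "c * Q (Suc (Suc m)) * w ^ delta (Suc (Suc j))
        = (w^2) ^ delta (Suc j) * w ^ delta (Suc (Suc j)) * (c * Q (Suc m))
          - p * (c * Q m * w ^ delta (Suc (Suc j)))"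
      by (simp add: Q_rec j_def algebra_simps)
    also have "\<dots> = w * (c * Q (Suc m) * w ^ delta (Suc j)) - p * (c * Q m * w ^ delta j)"
      by (subst power_delta_square_shift, subst delta_Suc_Suc) (simp add: algebra_simps)
    also have "\<dots> = u n"
      using IH 3 u_rec by simp
    finally show ?thesis using 3 by (simp add: j_def)
  qed (use Q_0 Q_1 in simp_all)
qed

lemma Psi_mult_power_delta:
  fixes x y :: "'a::comm_ring_1"
  shows "Psi (x*y) (- (x^2) - y^2) n * (x + y) ^ delta n = x^n + y^n"
proof -
  have "1 * Psi (x*y) (- (x^2) - y^2) n * (x + y) ^ delta (n + 0) = x^n + y^n"
  proof (rule parity_twisted_recurrence_solution[where u = "\<lambda>n. x^n + y^n"])
    show "Psi (x*y) (- (x^2) - y^2) (Suc (Suc m))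
        = ((x + y)^2) ^ delta (Suc m + 0) * Psi (x*y) (- (x^2) - y^2) (Suc m)
          - x * y * Psi (x*y) (- (x^2) - y^2) m" for m
      by (simp only: Psi.simps two_mult_minus_sum_squares) simp
  qed (simp_all only: power_sum_Lucas_recurrence, simp_all add: delta_def)
  then show ?thesis by simp
qed

(* The exponent delta (Suc n) agrees with the paper's delta (n - 1) for n >= 1 and avoids the
   truncated subtraction at n = 0. *)
lemma Phi_mult_power_delta:
  fixes x y :: "'a::comm_ring_1"
  shows "(x - y) * Phi (x*y) (- (x^2) - y^2) n * (x + y) ^ delta (Suc n) = x^n - y^n"
proof -
  have "(x - y) * Phi (x*y) (- (x^2) - y^2) n * (x + y) ^ delta (n + 1) = x^n - y^n"
  proof (rule parity_twisted_recurrence_solution[where u = "\<lambda>n. x^n - y^n"])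
    show "Phi (x*y) (- (x^2) - y^2) (Suc (Suc m))
        = ((x + y)^2) ^ delta (Suc m + 1) * Phi (x*y) (- (x^2) - y^2) (Suc m)
          - x * y * Phi (x*y) (- (x^2) - y^2) m" for m
      by (simp only: Phi.simps two_mult_minus_sum_squares) simp
  qed (simp_all only: power_diff_Lucas_recurrence, simp_all add: delta_def)
  then show ?thesis by simp
qed

theorem theorem11p1:
  fixes x y :: "'a::field" and n :: nat
  assumes "n \<ge> 1" and "x \<noteq> y" and "x + y \<noteq> 0"
  shows "(Psi (x*y) (- (x^2) - y^2) n = (x^n + y^n) / (x + y) ^ delta n) \<and>
        (
         Phi (x*y) (- (x^2) - y^2) n = (x^n - y^n) / ((x - y) * (x + y) ^ delta (n - 1)))"
proof
  show "Psi (x*y) (- (x^2) - y^2) n = (x^n + y^n) / (x + y) ^ delta n"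
    using Psi_mult_power_delta[of x y n] assms(3) by (simp add: eq_divide_eq)
next
  have "delta (n - 1) = delta (Suc n)"
    using assms(1) by (simp add: delta_def)
  then show "Phi (x*y) (- (x^2) - y^2) n = (x^n - y^n) / ((x - y) * (x + y) ^ delta (n - 1))"
    using Phi_mult_power_delta[of x y n] assms(2,3) by (simp add: eq_divide_eq algebra_simps)
qed

end
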